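(* Let $d\ge1$, $\nu>0$, $\mu>0$, and let $N$ be a random variable with $\Pr\{N=n\}=c_n^{(\nu,\mu)}$, $n=0,1,\dots$. Then $\sum_{n=0}^\infty c_n^{(\nu,\mu)}=1$; if $\nu,\mu>1$ then \[ EN=\frac d2\left(\frac{B(\nu-1,\mu-1)}{B(\nu,\mu)}-1\right); \] and if $\nu,\mu>2$ then \[ \operatorname{Var}(N)=\frac d4\left((d+2)\frac{B(\nu-2,\mu-2)}{B(\nu,\mu)}-2\frac{B(\nu-1,\mu-1)}{B(\nu,\mu)}-d\frac{B^2(\nu-1,\mu-1)}{B^2(\nu,\mu)}\right). \]
   Context: $c_n^{(\nu,\mu)}=\frac{1}{B(\nu,\mu)}\frac{(\frac d2)_n}{n!}\int_0^1 t^{\mu+\frac d2-1}(1-t)^{\nu+\frac d2-1}(1-t+t^2)^n\,dt$, where $B$ is the Beta function and $(a)_n=a(a+1)\cdots(a+n-1)$. *)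

theory Defs
  imports "HOL-Analysis.Analysis"
begin

definition coef :: "nat \<Rightarrow> real \<Rightarrow> real \<Rightarrow> nat \<Rightarrow> real" where
  "coef d \<nu> \<mu> n =
     1 / Beta \<nu> \<mu> * (pochhammer (real d / 2) n / fact n) *
     integral {0..1} (\<lambda>t::real. t powr (\<mu> + real d / 2 - 1) *
                                 (1 - t) powr (\<nu> + real d / 2 - 1) *
                                 (1 - t + t\<^sup>2) ^ n)"

end

theory Submission
  imports Defs
begin

text \<open>
  For \<open>0 < t < 1\<close> let \<open>x = 1 - t + t^2\<close>, so that \<open>1 - x = t (1 - t)\<close>. Integrating the
  binomial series \<open>\<Sum>n. (a)_n / n! * x^n = (1 - x) powr (-a)\<close> termwise against
  \<open>t^(\<mu>+a-1) (1-t)^(\<nu>+a-1)\<close>, \<open>a = d/2\<close>, evaluates the factorial moments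
  \<open>\<Sum>n. (n choose k) c_n\<close>: since \<open>(n choose k) (a)_n / n! = (a)_k / k! * (a+k)_(n-k) / (n-k)!\<close>,
  the \<open>k\<close>-th one is the same series with \<open>a + k\<close> in place of \<open>a\<close> and an extra factor
  \<open>x^k = (1 - t(1-t))^k\<close>, and expanding that factor binomially leaves a finite alternating
  sum of Beta values. The cases \<open>k = 0, 1, 2\<close> give the total mass, the mean and the variance.
\<close>

lemma pochhammer_binomial_series:
  fixes b x :: real
  assumes "0 \<le> x" "x < 1"
  shows "(\<lambda>n. pochhammer b n / fact n * x ^ n) sums (1 - x) powr (-b)"
proof -
  have "((-b) gchoose n) * (-x) ^ n = pochhammer b n / fact n * x ^ n" for n
    by (simp add: gbinomial_pochhammer power_minus[of x n] mult_ac
                  flip: power_mult_distrib[of "-1" "-1" n])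
  with gen_binomial_real[of "-x" "-b"] assms show ?thesis by simp
qed

lemma sums_integral_pochhammer_series:
  fixes b I a c :: real and g x :: "real \<Rightarrow> real"
  assumes "b > 0"
    and g_nonneg: "\<And>t. t \<in> {a<..<c} \<Longrightarrow> g t \<ge> 0"
    and x_range: "\<And>t. t \<in> {a<..<c} \<Longrightarrow> 0 \<le> x t \<and> x t < 1"
    and "continuous_on {a<..<c} g" "continuous_on {a<..<c} x"
    and G: "((\<lambda>t. g t * (1 - x t) powr (-b)) has_integral I) {a<..<c}"
  shows "(\<lambda>n. pochhammer b n / fact n * integral {a..c} (\<lambda>t. g t * x t ^ n)) sums I"
proof -
  define U where "U = {a<..<c}"
  define f where "f n = (\<lambda>t. pochhammer b n / fact n * (g t * x t ^ n))" for n
  define S where "S N t = (\<Sum>n<N. f n t)" for N t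
  have U: "U \<in> sets lebesgue" by (simp add: U_def)
  have f_nonneg: "0 \<le> f n t" if "t \<in> U" for n t
    unfolding f_def using g_nonneg[of t] x_range[of t] that \<open>b > 0\<close>
    by (auto simp: U_def less_imp_le[OF pochhammer_pos])
  have f_sums: "(\<lambda>n. f n t) sums (g t * (1 - x t) powr (-b))" if "t \<in> U" for t
  proof -
    have "(\<lambda>n. g t * (pochhammer b n / fact n * x t ^ n)) sums (g t * (1 - x t) powr (-b))"
      using that x_range[of t] by (intro sums_mult pochhammer_binomial_series) (auto simp: U_def)
    then show ?thesis by (simp add: f_def mult_ac)
  qed
  have S_le: "S N t \<le> g t * (1 - x t) powr (-b)" and S_nonneg: "0 \<le> S N t"
    if "t \<in> U" for N t
    using sum_le_suminf[OF sums_summable[OF f_sums[OF that]], of "{..<N}"]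
      f_nonneg[OF that] sums_unique[OF f_sums[OF that]]
    by (auto simp: S_def intro: sum_nonneg)
  have G_int: "(\<lambda>t. g t * (1 - x t) powr (-b)) integrable_on U"
    using G by (auto simp: U_def integrable_on_def)
  have f_int: "f n integrable_on U" for n
  proof (rule measurable_bounded_by_integrable_imp_integrable[OF _ G_int _ U])
    show "f n \<in> borel_measurable (lebesgue_on U)" unfolding f_def
      by (intro continuous_imp_measurable_on_sets_lebesgue U continuous_intros)
         (use assms in \<open>simp_all add: U_def\<close>)
    show "norm (f n t) \<le> g t * (1 - x t) powr (-b)" if "t \<in> U" for t
      using f_nonneg[OF that] S_le[OF that, of "Suc n"] S_nonneg[OF that, of n]
      by (simp add: S_def)
  qed
  have S_int: "S N integrable_on U" for N
    unfolding S_def by (intro integrable_sum f_int) simp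
  have partial_sums: "integral U (S N) =
      (\<Sum>n<N. pochhammer b n / fact n * integral {a..c} (\<lambda>t. g t * x t ^ n))" for N
  proof -
    have "integral U (S N) = (\<Sum>n<N. integral U (f n))"
      unfolding S_def by (intro Henstock_Kurzweil_Integration.integral_sum f_int) simp
    also have "\<dots> = (\<Sum>n<N. pochhammer b n / fact n * integral U (\<lambda>t. g t * x t ^ n))"
      by (simp only: f_def integral_mult_right)
    finally show ?thesis by (simp add: U_def integral_open_interval_real)
  qed
  have "integral U (\<lambda>t. g t * (1 - x t) powr (-b)) = I"
    using G unfolding U_def by (rule integral_unique)
  moreover have "(\<lambda>N. integral U (S N)) \<longlonglongrightarrow> integral U (\<lambda>t. g t * (1 - x t) powr (-b))"
  proof (rule dominated_convergence(2)[OF S_int G_int])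
    show "norm (S N t) \<le> g t * (1 - x t) powr (-b)" if "t \<in> U" for N t
      using S_le[OF that] S_nonneg[OF that] by simp
    show "(\<lambda>N. S N t) \<longlonglongrightarrow> g t * (1 - x t) powr (-b)" if "t \<in> U" for t
      using f_sums[OF that] by (simp add: S_def sums_def)
  qed
  ultimately show ?thesis
    unfolding sums_def partial_sums[symmetric] by simp
qed

lemma binomial_times_pochhammer_over_fact:
  fixes a :: real
  shows "real ((n + k) choose k) * (pochhammer a (n + k) / fact (n + k))
           = pochhammer a k / fact k * (pochhammer (a + real k) n / fact n)"
proof -
  have "real ((n + k) choose k) = fact (n + k) / (fact k * fact n)"
    by (simp add: binomial_fact)
  moreover have "pochhammer a (n + k) = pochhammer a k * pochhammer (a + real k) n"
    by (simp add: pochhammer_product' add.commute)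
  ultimately show ?thesis by simp
qed

lemma has_integral_Beta_binomial:
  fixes p q :: real
  assumes "p > 0" "q > 0"
  shows "((\<lambda>t. t powr (p - 1) * (1 - t) powr (q - 1) * (1 - t * (1 - t)) ^ k) has_integral
           (\<Sum>j\<le>k. (-1) ^ j * real (k choose j) * Beta (p + j) (q + j))) {0<..<1}"
proof -
  have sum_int: "((\<lambda>t. \<Sum>j\<le>k. (-1) ^ j * real (k choose j) *
                              (t powr (p + j - 1) * (1 - t) powr (q + j - 1)))
          has_integral (\<Sum>j\<le>k. (-1) ^ j * real (k choose j) * Beta (p + j) (q + j))) {0<..<1}"
  proof (intro has_integral_sum has_integral_mult_right)
    show "((\<lambda>t. t powr (p + j - 1) * (1 - t) powr (q + j - 1)) has_integral Beta (p + j) (q + j))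
            {0<..<1}" for j :: nat
      by (rule has_integral_Beta_real[unfolded has_integral_Icc_iff_Ioo]) (use assms in auto)
  qed simp
  have pointwise: "t powr (p - 1) * (1 - t) powr (q - 1) * (1 - t * (1 - t)) ^ k
      = (\<Sum>j\<le>k. (-1) ^ j * real (k choose j) * (t powr (p + j - 1) * (1 - t) powr (q + j - 1)))"
    if "t \<in> {0<..<1}" for t
  proof -
    have t: "0 < t" "0 < 1 - t" using that by auto
    have powr_shift: "u powr (r + j - 1) = u powr (r - 1) * u ^ j" if "u > 0" for u r :: real and j
    proof -
      have "u powr (r + j - 1) = u powr ((r - 1) + real j)" by (simp add: algebra_simps)
      also have "\<dots> = u powr (r - 1) * u ^ j" using that by (simp only: powr_add powr_realpow)
      finally show ?thesis .
    qed
    have expand: "(1 - t * (1 - t)) ^ k = (\<Sum>j\<le>k. real (k choose j) * (- (t * (1 - t))) ^ j)"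
      using binomial_ring[of "- (t * (1 - t))" 1 k] by simp
    have summand: "t powr (p - 1) * (1 - t) powr (q - 1) * (real (k choose j) * (- (t * (1 - t))) ^ j)
        = (-1) ^ j * real (k choose j) * (t powr (p + j - 1) * (1 - t) powr (q + j - 1))" for j
      unfolding powr_shift[OF t(1)] powr_shift[OF t(2)] power_minus[of "t * (1 - t)"]
        power_mult_distrib
      by (simp only: mult_ac)
    show ?thesis
      unfolding expand sum_distrib_left by (rule sum.cong[OF refl summand])
  qed
  show ?thesis
    by (rule has_integral_cong[THEN iffD2, OF pointwise sum_int])
qed

lemma Beta_real_pos: "0 < a \<Longrightarrow> 0 < b \<Longrightarrow> 0 < Beta a (b :: real)"
  by (simp add: Beta_def)

lemma coef_binomial_moment:
  fixes d k :: nat and \<nu> \<mu> :: real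
  assumes "d \<ge> 1" "\<nu> > k" "\<mu> > k"
  shows "(\<lambda>n. real (n choose k) * coef d \<nu> \<mu> n) sums
           (pochhammer (real d / 2) k / fact k / Beta \<nu> \<mu> *
            (\<Sum>j\<le>k. (-1) ^ j * real (k choose j) * Beta (\<nu> - k + j) (\<mu> - k + j)))"
proof -
  define a where "a = real d / 2"
  define x where "x t = 1 - t + t\<^sup>2" for t :: real
  define g where "g t = t powr (\<mu> + a - 1) * (1 - t) powr (\<nu> + a - 1) * x t ^ k" for t
  define M where "M = (\<Sum>j\<le>k. (-1) ^ j * real (k choose j) * Beta (\<nu> - k + j) (\<mu> - k + j))"
  have "a > 0" using assms(1) by (simp add: a_def)
  have x: "x t = 1 - t * (1 - t)" for t by (simp add: x_def power2_eq_square algebra_simps)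
  have x_range: "0 \<le> x t \<and> x t < 1" if "t \<in> {0<..<1}" for t
    using that by (auto simp: x_def power2_eq_square intro: add_nonneg_nonneg mult_strict_right_mono)
  have weight: "g t * (1 - x t) powr (-(a + k)) =
      t powr (\<mu> - k - 1) * (1 - t) powr (\<nu> - k - 1) * (1 - t * (1 - t)) ^ k"
    if "t \<in> {0<..<1}" for t
  proof -
    have "t > 0" "1 - t > 0" using that by auto
    have shift: "u powr (e + a - 1) * u powr (-(a + k)) = u powr (e - k - 1)" for u e :: real
    proof -
      have "u powr (e + a - 1) * u powr (-(a + k)) = u powr ((e + a - 1) + (-(a + k)))"
        by (rule powr_add[symmetric])
      also have "(e + a - 1) + (-(a + k)) = e - k - 1" by simp
      finally show ?thesis .
    qed
    have "(1 - x t) powr (-(a + k)) = t powr (-(a + k)) * (1 - t) powr (-(a + k))"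
      using \<open>t > 0\<close> \<open>1 - t > 0\<close> by (simp add: x powr_mult)
    then show ?thesis
      using shift[of t \<mu>] shift[of "1 - t" \<nu>]
      by (simp add: g_def x mult_ac)
  qed
  have "((\<lambda>t. g t * (1 - x t) powr (-(a + k))) has_integral M) {0<..<1}"
  proof (rule has_integral_cong[THEN iffD2, OF weight])
    show "((\<lambda>t. t powr (\<mu> - k - 1) * (1 - t) powr (\<nu> - k - 1) * (1 - t * (1 - t)) ^ k)
            has_integral M) {0<..<1}"
      using has_integral_Beta_binomial[of "\<mu> - k" "\<nu> - k" k] assms
      by (simp add: M_def Beta_commute)
  qed
  then have "(\<lambda>n. pochhammer (a + k) n / fact n * integral {0..1} (\<lambda>t. g t * x t ^ n)) sums M"
    using \<open>a > 0\<close> x_range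
    by (intro sums_integral_pochhammer_series) (auto simp: g_def x_def intro!: continuous_intros)
  then have "(\<lambda>n. pochhammer a k / fact k / Beta \<nu> \<mu> *
      (pochhammer (a + k) n / fact n * integral {0..1} (\<lambda>t. g t * x t ^ n))) sums
      (pochhammer a k / fact k / Beta \<nu> \<mu> * M)"
    by (rule sums_mult)
  moreover have "pochhammer a k / fact k / Beta \<nu> \<mu> *
      (pochhammer (a + k) n / fact n * integral {0..1} (\<lambda>t. g t * x t ^ n))
      = real ((n + k) choose k) * coef d \<nu> \<mu> (n + k)" for n
  proof -
    define J where "J = integral {0..1} (\<lambda>t. g t * x t ^ n)"
    have "real ((n + k) choose k) * coef d \<nu> \<mu> (n + k)
        = real ((n + k) choose k) * (pochhammer a (n + k) / fact (n + k)) * J / Beta \<nu> \<mu>"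
      by (simp add: coef_def J_def g_def x_def a_def power_add mult_ac)
    also have "\<dots> = pochhammer a k / fact k * (pochhammer (a + k) n / fact n) * J / Beta \<nu> \<mu>"
      by (simp only: binomial_times_pochhammer_over_fact)
    finally show ?thesis
      by (simp add: J_def divide_inverse mult_ac)
  qed
  ultimately have "(\<lambda>n. real ((n + k) choose k) * coef d \<nu> \<mu> (n + k)) sums
      (pochhammer a k / fact k / Beta \<nu> \<mu> * M)"
    by simp
  then show ?thesis
    by (subst (asm) sums_zero_iff_shift) (simp_all add: a_def M_def)
qed

lemma two_times_choose_two: "2 * real (n choose 2) = real n * (real n - 1)"
  by (induction n) (auto simp: numeral_2_eq_2 algebra_simps)

lemma sums_variance_from_factorial_moments:
  fixes p :: "nat \<Rightarrow> real"
  assumes "p sums 1" "(\<lambda>n. real n * p n) sums m" "(\<lambda>n. real (n choose 2) * p n) sums s"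
  shows "(\<lambda>n. (real n - m)\<^sup>2 * p n) sums (2 * s + m - m\<^sup>2)"
proof -
  have moments: "(\<lambda>n. 2 * (real (n choose 2) * p n) + (1 - 2 * m) * (real n * p n) + m\<^sup>2 * p n) sums
      (2 * s + (1 - 2 * m) * m + m\<^sup>2 * 1)"
    by (intro sums_add sums_mult assms)
  have square: "2 * (real (n choose 2) * p n) + (1 - 2 * m) * (real n * p n) + m\<^sup>2 * p n
      = (real n - m)\<^sup>2 * p n" for n
  proof -
    have "2 * (real (n choose 2) * p n) = real n * (real n - 1) * p n"
      using two_times_choose_two[of n] by simp
    then show ?thesis by (simp add: power2_eq_square algebra_simps)
  qed
  from moments have "(\<lambda>n. (real n - m)\<^sup>2 * p n) sums (2 * s + (1 - 2 * m) * m + m\<^sup>2 * 1)"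
    by (simp only: square)
  then show ?thesis
    by (simp add: power2_eq_square algebra_simps)
qed

theorem theorem8:
  fixes d :: nat and \<nu> \<mu> :: real
  assumes "d \<ge> 1" and "\<nu> > 0" and "\<mu> > 0"
  shows "coef d \<nu> \<mu> sums 1 \<and>
         (\<nu> > 1 \<and> \<mu> > 1 \<longrightarrow>
           (\<lambda>n. real n * coef d \<nu> \<mu> n) sums
             (real d / 2 * (Beta (\<nu> - 1) (\<mu> - 1) / Beta \<nu> \<mu> - 1))) \<and>
         (\<nu> > 2 \<and> \<mu> > 2 \<longrightarrow>
           (\<lambda>n. (real n - real d / 2 * (Beta (\<nu> - 1) (\<mu> - 1) / Beta \<nu> \<mu> - 1))\<^sup>2
                 * coef d \<nu> \<mu> n) sums
             (real d / 4 * ((real d + 2) * (Beta (\<nu> - 2) (\<mu> - 2) / Beta \<nu> \<mu>)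
                 - 2 * (Beta (\<nu> - 1) (\<mu> - 1) / Beta \<nu> \<mu>)
                 - real d * ((Beta (\<nu> - 1) (\<mu> - 1))\<^sup>2 / (Beta \<nu> \<mu>)\<^sup>2))))"
proof -
  have "0 < Beta \<nu> \<mu>" using assms by (intro Beta_real_pos)
  define r1 where "r1 = Beta (\<nu> - 1) (\<mu> - 1) / Beta \<nu> \<mu>"
  define r2 where "r2 = Beta (\<nu> - 2) (\<mu> - 2) / Beta \<nu> \<mu>"
  have total: "coef d \<nu> \<mu> sums 1"
    using coef_binomial_moment[of d 0 \<nu> \<mu>] assms \<open>0 < Beta \<nu> \<mu>\<close> by simp
  have mean: "(\<lambda>n. real n * coef d \<nu> \<mu> n) sums (real d / 2 * (r1 - 1))"
    if "\<nu> > 1" "\<mu> > 1"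
    using coef_binomial_moment[of d 1 \<nu> \<mu>] assms that \<open>0 < Beta \<nu> \<mu>\<close>
    by (simp add: r1_def field_simps)
  have pairs: "(\<lambda>n. real (n choose 2) * coef d \<nu> \<mu> n) sums
      (real d / 2 * (real d / 2 + 1) / 2 * (r2 - 2 * r1 + 1))" if "\<nu> > 2" "\<mu> > 2"
    using coef_binomial_moment[of d 2 \<nu> \<mu>] assms that \<open>0 < Beta \<nu> \<mu>\<close>
    by (simp add: r1_def r2_def numeral_2_eq_2 pochhammer_Suc field_simps)
  have variance: "(\<lambda>n. (real n - real d / 2 * (r1 - 1))\<^sup>2 * coef d \<nu> \<mu> n) sums
      (real d / 4 * ((real d + 2) * r2 - 2 * r1 - real d * r1\<^sup>2))" if "\<nu> > 2" "\<mu> > 2"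
  proof -
    have "\<nu> > 1" "\<mu> > 1" using that by auto
    have variance_eq: "real d / 4 * ((real d + 2) * r2 - 2 * r1 - real d * r1\<^sup>2)
        = 2 * (real d / 2 * (real d / 2 + 1) / 2 * (r2 - 2 * r1 + 1))
          + real d / 2 * (r1 - 1) - (real d / 2 * (r1 - 1))\<^sup>2"
      by (simp add: power2_eq_square field_simps)
    show ?thesis
      unfolding variance_eq
      by (rule sums_variance_from_factorial_moments
               [OF total mean[OF \<open>\<nu> > 1\<close> \<open>\<mu> > 1\<close>] pairs[OF that]])
  qed
  show ?thesis
    using total mean variance by (simp add: r1_def r2_def power_divide)
qed

end
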